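(* Let $(S,d)$ be a finite metric space partitioned into two disjoint groups $S=S_1\cup S_2$, let $k_1,k_2$ be nonnegative integers with $k=k_1+k_2$, and let $r^*$ be the optimal radius of the fair $k$-center problem on this instance. For $l\in\{1,2\}$ let $\Gamma_l\subseteq S_l$ be a $2r^*$-independent center set of $S_l$, and suppose $|\Gamma_1|>k_1$ and $|\Gamma_2|>k_2$. Run Phase 1 (described in the context) on $\Gamma_1,\Gamma_2$. Then when Phase 1 completes, the resulting set $C$ satisfies $|C\cap S_l|\le k_l$ for each $l\in\{1,2\}$.
   Context: The fair $k$-center problem: a set $C\subseteq S$ is feasible if $|C\cap S_l|\le k_l$ for each $l$; its cost is $\max_{s\in S}d(s,C)$ with $d(s,C)=\min_{c\in C}d(s,c)$ and $d(s,\emptyset)=\infty$. The optimal radius $r^*$ is the minimum cost over feasible $C$. For $T\subseteq S$, a set $\Gamma\subseteq T$ is a $\lambda$-independent center set of $T$ if (1) $d(p,q)>\lambda$ for any two distinct $p,q\in\Gamma$, and (2) every $p\in T$ has some $q\in\Gamma$ with $d(p,q)\le\lambda$. Phase 1: set $C\leftarrow\emptyset$; build the bipartite auxiliary graph $G$ with vertex set $\Gamma_1\cup\Gamma_2$ in which $p\in\Gamma_1$ and $q\in\Gamma_2$ are joined by an edge iff $d(p,q)\le 3r^*$ (no other edges); then, for each vertex $i$ of degree $0$ in $G$ (in any order), if $d(C,i)>2r^*$ add $i$ to $C$; finally remove all degree-$0$ vertices from $G$. *)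

theory Defs
  imports "HOL-Library.Extended_Real"
begin

definition metric_on :: "'a set \<Rightarrow> ('a \<Rightarrow> 'a \<Rightarrow> real) \<Rightarrow> bool" where
  "metric_on S d \<longleftrightarrow>
     (\<forall>x\<in>S. d x x = 0) \<and>
     (\<forall>x\<in>S. \<forall>y\<in>S. x \<noteq> y \<longrightarrow> d x y > 0) \<and>
     (\<forall>x\<in>S. \<forall>y\<in>S. d x y = d y x) \<and>
     (\<forall>x\<in>S. \<forall>y\<in>S. \<forall>z\<in>S. d x z \<le> d x y + d y z)"

text \<open>Distance from a point to a set; the empty set is at distance infinity.\<close>
definition dist_set :: "('a \<Rightarrow> 'a \<Rightarrow> real) \<Rightarrow> 'a \<Rightarrow> 'a set \<Rightarrow> ereal" where
  "dist_set d s C = (INF c\<in>C. ereal (d s c))"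

definition fair_feasible :: "'a set \<Rightarrow> 'a set \<Rightarrow> nat \<Rightarrow> 'a set \<Rightarrow> nat \<Rightarrow> 'a set \<Rightarrow> bool" where
  "fair_feasible S S1 k1 S2 k2 C \<longleftrightarrow> C \<subseteq> S \<and> card (C \<inter> S1) \<le> k1 \<and> card (C \<inter> S2) \<le> k2"

definition kcenter_cost :: "('a \<Rightarrow> 'a \<Rightarrow> real) \<Rightarrow> 'a set \<Rightarrow> 'a set \<Rightarrow> ereal" where
  "kcenter_cost d S C = (SUP s\<in>S. dist_set d s C)"

definition opt_radius ::
  "('a \<Rightarrow> 'a \<Rightarrow> real) \<Rightarrow> 'a set \<Rightarrow> 'a set \<Rightarrow> nat \<Rightarrow> 'a set \<Rightarrow> nat \<Rightarrow> ereal" where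
  "opt_radius d S S1 k1 S2 k2 =
     (INF C\<in>{C. fair_feasible S S1 k1 S2 k2 C}. kcenter_cost d S C)"

definition independent_center_set ::
  "('a \<Rightarrow> 'a \<Rightarrow> real) \<Rightarrow> ereal \<Rightarrow> 'a set \<Rightarrow> 'a set \<Rightarrow> bool" where
  "independent_center_set d lam T \<Gamma> \<longleftrightarrow>
     \<Gamma> \<subseteq> T \<and>
     (\<forall>p\<in>\<Gamma>. \<forall>q\<in>\<Gamma>. p \<noteq> q \<longrightarrow> ereal (d p q) > lam) \<and>
     (\<forall>p\<in>T. \<exists>q\<in>\<Gamma>. ereal (d p q) \<le> lam)"

definition aux_edge ::
  "('a \<Rightarrow> 'a \<Rightarrow> real) \<Rightarrow> ereal \<Rightarrow> 'a set \<Rightarrow> 'a set \<Rightarrow> 'a \<Rightarrow> 'a \<Rightarrow> bool" where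
  "aux_edge d r \<Gamma>1 \<Gamma>2 u v \<longleftrightarrow>
     (u \<in> \<Gamma>1 \<and> v \<in> \<Gamma>2 \<and> ereal (d u v) \<le> 3 * r) \<or>
     (v \<in> \<Gamma>1 \<and> u \<in> \<Gamma>2 \<and> ereal (d v u) \<le> 3 * r)"

definition isolated_vertices ::
  "('a \<Rightarrow> 'a \<Rightarrow> real) \<Rightarrow> ereal \<Rightarrow> 'a set \<Rightarrow> 'a set \<Rightarrow> 'a set" where
  "isolated_vertices d r \<Gamma>1 \<Gamma>2 =
     {i \<in> \<Gamma>1 \<union> \<Gamma>2. \<not> (\<exists>j\<in>\<Gamma>1 \<union> \<Gamma>2. aux_edge d r \<Gamma>1 \<Gamma>2 i j)}"

definition phase1_step :: "('a \<Rightarrow> 'a \<Rightarrow> real) \<Rightarrow> ereal \<Rightarrow> 'a \<Rightarrow> 'a set \<Rightarrow> 'a set" where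
  "phase1_step d r i C = (if (INF c\<in>C. ereal (d c i)) > 2 * r then insert i C else C)"

text \<open>Phase 1 processing the degree-0 vertices in the order given by the list.\<close>
definition phase1 :: "('a \<Rightarrow> 'a \<Rightarrow> real) \<Rightarrow> ereal \<Rightarrow> 'a list \<Rightarrow> 'a set" where
  "phase1 d r xs = fold (phase1_step d r) xs {}"

end

theory Submission
  imports Defs
begin

text \<open>Let \<open>C\<^sup>*\<close> be an optimal fair solution of radius \<open>\<rho>\<close>. Phase 1 keeps only isolated vertices
  of the auxiliary graph, and its output is \<open>2\<rho>\<close>-separated. An isolated vertex \<open>i \<in> \<Gamma>\<^sub>1\<close>
  is more than \<open>3\<rho>\<close> away from \<open>\<Gamma>\<^sub>2\<close>, while every point of \<open>S\<^sub>2\<close> is within \<open>2\<rho>\<close> of \<open>\<Gamma>\<^sub>2\<close>;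
  hence the optimal center serving \<open>i\<close> (at distance \<open>\<le> \<rho>\<close>) lies in \<open>S\<^sub>1\<close>. By separation
  distinct chosen vertices are served by distinct optimal centers, so at most
  \<open>|C\<^sup>* \<inter> S\<^sub>1| \<le> k\<^sub>1\<close> vertices of \<open>S\<^sub>1\<close> are chosen. The groups play symmetric roles.
  If \<open>\<rho> = \<infinity>\<close>, no vertex is isolated.\<close>

lemma metric_on_sym: "metric_on S d \<Longrightarrow> x \<in> S \<Longrightarrow> y \<in> S \<Longrightarrow> d x y = d y x"
  by (simp add: metric_on_def)

lemma metric_on_triangle:
  "metric_on S d \<Longrightarrow> x \<in> S \<Longrightarrow> y \<in> S \<Longrightarrow> z \<in> S \<Longrightarrow> d x z \<le> d x y + d y z"
  by (simp add: metric_on_def)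

lemma dist_set_empty [simp]: "dist_set d s {} = \<infinity>"
  by (simp add: dist_set_def top_ereal_def)

lemma dist_set_attained:
  assumes "finite C" "C \<noteq> {}"
  shows "\<exists>c\<in>C. dist_set d s C = ereal (d s c)"
proof -
  have "Min ((\<lambda>c. ereal (d s c)) ` C) \<in> (\<lambda>c. ereal (d s c)) ` C"
    using assms by simp
  then show ?thesis
    using assms by (auto simp: dist_set_def Min_Inf)
qed

lemma dist_set_le_kcenter_cost: "s \<in> S \<Longrightarrow> dist_set d s C \<le> kcenter_cost d S C"
  unfolding kcenter_cost_def by (rule SUP_upper)

lemma kcenter_cost_le_imp_cover:
  assumes "finite C" "kcenter_cost d S C \<le> ereal \<rho>" "s \<in> S"
  shows "\<exists>c\<in>C. d s c \<le> \<rho>"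
proof -
  have le: "dist_set d s C \<le> ereal \<rho>"
    using dist_set_le_kcenter_cost[OF assms(3)] assms(2) by (rule order_trans)
  have "C \<noteq> {}"
  proof
    assume "C = {}"
    with le show False by simp
  qed
  then obtain c where "c \<in> C" "dist_set d s C = ereal (d s c)"
    using dist_set_attained[OF assms(1)] by blast
  with le show ?thesis by auto
qed

lemma kcenter_cost_not_MInf:
  assumes "finite C" "S \<noteq> {}"
  shows "kcenter_cost d S C \<noteq> -\<infinity>"
proof
  assume MInf: "kcenter_cost d S C = -\<infinity>"
  obtain s where "s \<in> S" using assms(2) by blast
  with MInf have "dist_set d s C = -\<infinity>"
    using dist_set_le_kcenter_cost[of s S d C] by simp
  moreover have "dist_set d s C \<noteq> -\<infinity>"
  proof (cases "C = {}")
    case False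
    then show ?thesis
      using dist_set_attained[OF assms(1) False, of d s] by auto
  qed simp
  ultimately show False by contradiction
qed

lemma opt_radius_attained:
  assumes "finite S"
  shows "\<exists>C. fair_feasible S S1 k1 S2 k2 C \<and> opt_radius d S S1 k1 S2 k2 = kcenter_cost d S C"
proof -
  let ?F = "{C. fair_feasible S S1 k1 S2 k2 C}"
  have "?F \<subseteq> Pow S"
    by (auto simp: fair_feasible_def)
  with assms have fin: "finite (kcenter_cost d S ` ?F)"
    by (simp add: finite_subset)
  have "{} \<in> ?F"
    by (simp add: fair_feasible_def)
  then have ne: "kcenter_cost d S ` ?F \<noteq> {}"
    by blast
  have "opt_radius d S S1 k1 S2 k2 = Min (kcenter_cost d S ` ?F)"
    unfolding opt_radius_def using fin ne by (simp add: Min_Inf)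
  moreover have "Min (kcenter_cost d S ` ?F) \<in> kcenter_cost d S ` ?F"
    using fin ne by (rule Min_in)
  ultimately show ?thesis by auto
qed

lemma opt_radius_not_MInf:
  assumes "finite S" "S \<noteq> {}"
  shows "opt_radius d S S1 k1 S2 k2 \<noteq> -\<infinity>"
proof -
  obtain C where "fair_feasible S S1 k1 S2 k2 C" "opt_radius d S S1 k1 S2 k2 = kcenter_cost d S C"
    using opt_radius_attained[OF assms(1)] by blast
  moreover from this have "finite C"
    using assms(1) finite_subset unfolding fair_feasible_def by blast
  ultimately show ?thesis
    using kcenter_cost_not_MInf[OF _ assms(2)] by simp
qed

lemma opt_radius_cover:
  assumes "finite S" "opt_radius d S S1 k1 S2 k2 = ereal \<rho>"
  shows "\<exists>C. fair_feasible S S1 k1 S2 k2 C \<and> (\<forall>s\<in>S. \<exists>c\<in>C. d s c \<le> \<rho>)"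
proof -
  obtain C where C: "fair_feasible S S1 k1 S2 k2 C" "opt_radius d S S1 k1 S2 k2 = kcenter_cost d S C"
    using opt_radius_attained[OF assms(1)] by blast
  then have "finite C"
    using assms(1) finite_subset unfolding fair_feasible_def by blast
  with C assms(2) show ?thesis
    using kcenter_cost_le_imp_cover[OF \<open>finite C\<close>, of d S \<rho>] by auto
qed

lemma fair_feasible_commute:
  "fair_feasible S S1 k1 S2 k2 C \<longleftrightarrow> fair_feasible S S2 k2 S1 k1 C"
  by (auto simp: fair_feasible_def)

lemma opt_radius_commute: "opt_radius d S S1 k1 S2 k2 = opt_radius d S S2 k2 S1 k1"
  by (simp add: opt_radius_def fair_feasible_commute)

lemma isolated_vertices_commute:
  assumes "metric_on S d" "\<Gamma>1 \<subseteq> S" "\<Gamma>2 \<subseteq> S"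
  shows "isolated_vertices d r \<Gamma>1 \<Gamma>2 = isolated_vertices d r \<Gamma>2 \<Gamma>1"
proof -
  have "aux_edge d r \<Gamma>1 \<Gamma>2 u v \<longleftrightarrow> aux_edge d r \<Gamma>2 \<Gamma>1 u v"
    if "u \<in> \<Gamma>1 \<union> \<Gamma>2" "v \<in> \<Gamma>1 \<union> \<Gamma>2" for u v
  proof -
    have "d u v = d v u"
      using metric_on_sym[OF assms(1)] assms(2,3) that by blast
    then show ?thesis by (auto simp: aux_edge_def)
  qed
  then show ?thesis
    unfolding isolated_vertices_def by (auto simp: Un_commute)
qed

lemma isolated_vertices_subset: "isolated_vertices d r \<Gamma>1 \<Gamma>2 \<subseteq> \<Gamma>1 \<union> \<Gamma>2"
  by (auto simp: isolated_vertices_def)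

lemma isolated_vertices_infinite_radius:
  assumes "\<Gamma>1 \<noteq> {}" "\<Gamma>2 \<noteq> {}"
  shows "isolated_vertices d \<infinity> \<Gamma>1 \<Gamma>2 = {}"
  using assms by (auto simp: isolated_vertices_def aux_edge_def)

lemma isolated_vertex_far:
  assumes "i \<in> isolated_vertices d r \<Gamma>1 \<Gamma>2" "i \<in> \<Gamma>1" "q \<in> \<Gamma>2"
  shows "3 * r < ereal (d i q)"
  using assms by (auto simp: isolated_vertices_def aux_edge_def not_le)

lemma fold_phase1_step_subset: "fold (phase1_step d r) xs Z \<subseteq> Z \<union> set xs"
proof (induction xs arbitrary: Z)
  case Nil
  then show ?case by simp
next
  case (Cons i xs)
  have "phase1_step d r i Z \<subseteq> insert i Z"
    by (auto simp: phase1_step_def)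
  with Cons.IH[of "phase1_step d r i Z"] show ?case by auto
qed

text \<open>Phase 1 only tests \<open>d c i\<close> against earlier centers \<open>c\<close>, and \<open>d\<close> is symmetric only on \<open>S\<close>;
  hence the disjunction.\<close>
lemma fold_phase1_step_pairwise:
  assumes "pairwise (\<lambda>x y. 2 * r < ereal (d x y) \<or> 2 * r < ereal (d y x)) Z"
  shows "pairwise (\<lambda>x y. 2 * r < ereal (d x y) \<or> 2 * r < ereal (d y x)) (fold (phase1_step d r) xs Z)"
  using assms
proof (induction xs arbitrary: Z)
  case Nil
  then show ?case by simp
next
  case (Cons i xs)
  have "pairwise (\<lambda>x y. 2 * r < ereal (d x y) \<or> 2 * r < ereal (d y x)) (phase1_step d r i Z)"
  proof (cases "2 * r < (INF c\<in>Z. ereal (d c i))")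
    case True
    then have "\<forall>c\<in>Z. 2 * r < ereal (d c i)"
      by (meson INF_lower order_less_le_trans)
    with True Cons.prems show ?thesis
      by (auto simp: phase1_step_def pairwise_insert)
  next
    case False
    with Cons.prems show ?thesis by (simp add: phase1_step_def)
  qed
  from Cons.IH[OF this] show ?case by simp
qed

lemma phase1_subset: "phase1 d r xs \<subseteq> set xs"
  using fold_phase1_step_subset[of d r xs "{}"] by (simp add: phase1_def)

lemma phase1_pairwise:
  "pairwise (\<lambda>x y. 2 * r < ereal (d x y) \<or> 2 * r < ereal (d y x)) (phase1 d r xs)"
  unfolding phase1_def by (rule fold_phase1_step_pairwise) simp

lemma card_separated_le_covering:
  fixes \<rho> :: real
  assumes met: "metric_on S d" and "C \<subseteq> S" "D \<subseteq> S" "finite D"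
    and cover: "\<forall>x\<in>C. \<exists>c\<in>D. d x c \<le> \<rho>"
    and sep: "pairwise (\<lambda>x y. 2 * \<rho> < d x y \<or> 2 * \<rho> < d y x) C"
  shows "card C \<le> card D"
proof -
  obtain f where f: "\<And>x. x \<in> C \<Longrightarrow> f x \<in> D \<and> d x (f x) \<le> \<rho>"
    using cover by metis
  have "inj_on f C"
  proof (rule inj_onI, rule ccontr)
    fix x y assume "x \<in> C" "y \<in> C" "f x = f y" "x \<noteq> y"
    define c where "c = f x"
    have "x \<in> S" "y \<in> S" "c \<in> S"
      using f \<open>x \<in> C\<close> \<open>C \<subseteq> S\<close> \<open>D \<subseteq> S\<close> \<open>y \<in> C\<close> by (auto simp: c_def)
    have near: "d x c \<le> \<rho>" "d y c \<le> \<rho>"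
      using f[of x] f[of y] \<open>x \<in> C\<close> \<open>y \<in> C\<close> \<open>f x = f y\<close> by (simp_all add: c_def)
    have "d x y \<le> d x c + d c y" "d y x \<le> d y c + d c x"
      using metric_on_triangle[OF met] \<open>x \<in> S\<close> \<open>y \<in> S\<close> \<open>c \<in> S\<close> by blast+
    moreover have "d c y = d y c" "d c x = d x c"
      using metric_on_sym[OF met] \<open>x \<in> S\<close> \<open>y \<in> S\<close> \<open>c \<in> S\<close> by blast+
    ultimately have "d x y \<le> 2 * \<rho>" "d y x \<le> 2 * \<rho>"
      using near by linarith+
    with sep \<open>x \<in> C\<close> \<open>y \<in> C\<close> \<open>x \<noteq> y\<close> show False
      unfolding pairwise_def by fastforce
  qed

  with f \<open>finite D\<close> show ?thesis
    by (intro card_inj_on_le) auto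
qed

lemma card_far_separated_le_centers:
  fixes \<rho> :: real
  assumes met: "metric_on S d" and S: "S = A \<union> B" and "finite Cs" "Cs \<subseteq> S"
    and cover: "\<forall>s\<in>S. \<exists>c\<in>Cs. d s c \<le> \<rho>"
    and "GB \<subseteq> S" and coverB: "\<forall>p\<in>B. \<exists>q\<in>GB. d p q \<le> 2 * \<rho>"
    and "C \<subseteq> A" and far: "\<forall>i\<in>C. \<forall>q\<in>GB. 3 * \<rho> < d i q"
    and sep: "pairwise (\<lambda>x y. 2 * \<rho> < d x y \<or> 2 * \<rho> < d y x) C"
  shows "card C \<le> card (Cs \<inter> A)"
proof (rule card_separated_le_covering[OF met _ _ _ _ sep])
  show "C \<subseteq> S" "Cs \<inter> A \<subseteq> S" "finite (Cs \<inter> A)"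
    using S \<open>C \<subseteq> A\<close> \<open>Cs \<subseteq> S\<close> \<open>finite Cs\<close> by auto
  show "\<forall>i\<in>C. \<exists>c\<in>Cs \<inter> A. d i c \<le> \<rho>"
  proof
    fix i assume "i \<in> C"
    with \<open>C \<subseteq> S\<close> have "i \<in> S" by blast
    with cover obtain c where c: "c \<in> Cs" "d i c \<le> \<rho>" by blast
    with \<open>Cs \<subseteq> S\<close> have "c \<in> S" by blast
    have "c \<in> A"
    proof (rule ccontr)
      assume "c \<notin> A"
      with \<open>c \<in> S\<close> S have "c \<in> B" by blast
      with coverB obtain q where q: "q \<in> GB" "d c q \<le> 2 * \<rho>" by blast
      with \<open>GB \<subseteq> S\<close> have "d i q \<le> d i c + d c q"
        using metric_on_triangle[OF met \<open>i \<in> S\<close> \<open>c \<in> S\<close>] by blast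
      moreover have "3 * \<rho> < d i q"
        using far \<open>i \<in> C\<close> q(1) by blast
      ultimately show False
        using c(2) q(2) by linarith
    qed
    with c show "\<exists>c\<in>Cs \<inter> A. d i c \<le> \<rho>" by blast
  qed
qed

lemma phase1_inter_subset:
  assumes "set order = isolated_vertices d r \<Gamma>1 \<Gamma>2" "\<Gamma>2 \<inter> S1 = {}"
  shows "phase1 d r order \<inter> S1 \<subseteq> isolated_vertices d r \<Gamma>1 \<Gamma>2 \<inter> \<Gamma>1"
  using phase1_subset[of d r order] isolated_vertices_subset[of d r \<Gamma>1 \<Gamma>2] assms by blast

lemma phase1_card_first_group_le:
  assumes "finite S" and met: "metric_on S d"
    and S: "S = S1 \<union> S2" and "S1 \<inter> S2 = {}"
    and r: "r = opt_radius d S S1 k1 S2 k2"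
    and I1: "independent_center_set d (2 * r) S1 \<Gamma>1"
    and I2: "independent_center_set d (2 * r) S2 \<Gamma>2"
    and "\<Gamma>1 \<noteq> {}" "\<Gamma>2 \<noteq> {}"
    and order: "set order = isolated_vertices d r \<Gamma>1 \<Gamma>2"
  shows "card (phase1 d r order \<inter> S1) \<le> k1"
proof -
  let ?C = "phase1 d r order \<inter> S1"
  have G: "\<Gamma>1 \<subseteq> S1" "\<Gamma>2 \<subseteq> S2"
    using I1 I2 unfolding independent_center_set_def by blast+
  with \<open>S1 \<inter> S2 = {}\<close> have iso: "?C \<subseteq> isolated_vertices d r \<Gamma>1 \<Gamma>2 \<inter> \<Gamma>1"
    using phase1_inter_subset[OF order] by blast
  show ?thesis
  proof (cases r)
    case PInf
    then show ?thesis
      using iso isolated_vertices_infinite_radius[OF \<open>\<Gamma>1 \<noteq> {}\<close> \<open>\<Gamma>2 \<noteq> {}\<close>] by simp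
  next
    case MInf
    moreover have "S \<noteq> {}"
      using \<open>\<Gamma>1 \<noteq> {}\<close> G S by auto
    ultimately show ?thesis
      using r opt_radius_not_MInf[OF \<open>finite S\<close>] by simp
  next
    case (real \<rho>)
    then obtain Cs where Cs: "fair_feasible S S1 k1 S2 k2 Cs" and cover: "\<forall>s\<in>S. \<exists>c\<in>Cs. d s c \<le> \<rho>"
      using opt_radius_cover[OF \<open>finite S\<close>] r by metis
    then have "Cs \<subseteq> S" "card (Cs \<inter> S1) \<le> k1"
      unfolding fair_feasible_def by blast+
    have "card ?C \<le> card (Cs \<inter> S1)"
    proof (rule card_far_separated_le_centers[OF met S _ \<open>Cs \<subseteq> S\<close> cover])
      show "finite Cs"
        using \<open>Cs \<subseteq> S\<close> \<open>finite S\<close> by (rule finite_subset)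
      show "\<Gamma>2 \<subseteq> S" "?C \<subseteq> S1"
        using G S by blast+
      show "\<forall>p\<in>S2. \<exists>q\<in>\<Gamma>2. d p q \<le> 2 * \<rho>"
        using I2 real by (auto simp: independent_center_set_def)
      show "\<forall>i\<in>?C. \<forall>q\<in>\<Gamma>2. 3 * \<rho> < d i q"
      proof (intro ballI)
        fix i q assume "i \<in> ?C" "q \<in> \<Gamma>2"
        with iso have "3 * r < ereal (d i q)"
          by (blast intro: isolated_vertex_far)
        then show "3 * \<rho> < d i q" by (simp add: real)
      qed
      show "pairwise (\<lambda>x y. 2 * \<rho> < d x y \<or> 2 * \<rho> < d y x) ?C"
        by (rule pairwise_mono[OF phase1_pairwise]) (auto simp: real)
    qed
    with \<open>card (Cs \<inter> S1) \<le> k1\<close> show ?thesis by simp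
  qed
qed

theorem lemma3:
  fixes S S1 S2 \<Gamma>1 \<Gamma>2 :: "'a set" and d :: "'a \<Rightarrow> 'a \<Rightarrow> real"
    and k1 k2 :: nat and r :: ereal and order :: "'a list"
  assumes "finite S" and "metric_on S d"
    and "S = S1 \<union> S2" and "S1 \<inter> S2 = {}"
    and "r = opt_radius d S S1 k1 S2 k2"
    and "independent_center_set d (2 * r) S1 \<Gamma>1"
    and "independent_center_set d (2 * r) S2 \<Gamma>2"
    and "card \<Gamma>1 > k1" and "card \<Gamma>2 > k2"
    and "distinct order" and "set order = isolated_vertices d r \<Gamma>1 \<Gamma>2"
  shows "card (phase1 d r order \<inter> S1) \<le> k1 \<and> card (phase1 d r order \<inter> S2) \<le> k2"
proof
  \<comment> \<open>The bounds on \<open>card \<Gamma>\<^sub>l\<close> only serve to make \<open>\<Gamma>\<^sub>l\<close> nonempty.\<close>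
  have ne: "\<Gamma>1 \<noteq> {}" "\<Gamma>2 \<noteq> {}"
    using assms(8,9) by auto
  show "card (phase1 d r order \<inter> S1) \<le> k1"
    by (rule phase1_card_first_group_le[OF assms(1-7) ne assms(11)])
  have "\<Gamma>1 \<subseteq> S" "\<Gamma>2 \<subseteq> S"
    using assms(3,6,7) by (auto simp: independent_center_set_def)
  then have order: "set order = isolated_vertices d r \<Gamma>2 \<Gamma>1"
    using isolated_vertices_commute[OF assms(2)] assms(11) by simp
  have groups: "S = S2 \<union> S1" "S2 \<inter> S1 = {}" and r: "r = opt_radius d S S2 k2 S1 k1"
    using assms(3-5) by (auto simp: opt_radius_commute)
  show "card (phase1 d r order \<inter> S2) \<le> k2"
    by (rule phase1_card_first_group_le[OF assms(1,2) groups r assms(7,6) ne(2,1) order])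
qed

end
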